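(* Let $d\ge1$, $P\subseteq\mathbb R\times[d]$, $\alpha\in(0,1]$ and $\beta=1-(1-\alpha)^{1/(2d)}$. Let $\mathcal C_1,\dots,\mathcal C_{2d}$ be finite subfamilies of $\mathcal C_{\equiv}(P)$. If at least $\alpha|\mathcal C_1|\cdots|\mathcal C_{2d}|$ of the colorful $2d$-tuples $(C_1,\dots,C_{2d})\in\mathcal C_1\times\cdots\times\mathcal C_{2d}$ satisfy $C_1\cap\dots\cap C_{2d}\ne\emptyset$, then some $\mathcal C_i$ contains a subfamily of size $\beta|\mathcal C_i|$ whose members have a common point.
   Context: $[d]=\{1,\dots,d\}$. A (separated) $d$-interval is a set $I=\bigcup_{i\in[d]}\{(x,i): x\in I^{(i)}\}\subseteq\mathbb R\times[d]$ with each $I^{(i)}\subseteq\mathbb R$ convex (possibly empty). For $P\subseteq\mathbb R\times[d]$, $\mathcal C_{\equiv}(P)=\{I\cap P: I \text{ a } d\text{-interval}\}$. *)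

theory Defs
  imports "HOL-Analysis.Analysis"
begin

definition d_interval :: "nat \<Rightarrow> (real \<times> nat) set \<Rightarrow> bool" where
  "d_interval d I \<longleftrightarrow> (\<exists>J :: nat \<Rightarrow> real set. (\<forall>i\<in>{1..d}. convex (J i)) \<and>
      I = {(x, i). i \<in> {1..d} \<and> x \<in> J i})"

definition C_equiv :: "nat \<Rightarrow> (real \<times> nat) set \<Rightarrow> (real \<times> nat) set set" where
  "C_equiv d P = {I \<inter> P | I. d_interval d I}"

end

theory Submission
  imports Defs
begin

text \<open>Suppose that in every family \<open>\<C> i\<close> each point lies in fewer than \<open>\<beta> |\<C> i|\<close>
  members, that is, the depth \<open>t i\<close> of \<open>\<C> i\<close> is below \<open>\<beta> |\<C> i|\<close>. We show that at least
  \<open>\<Prod>i (|\<C> i| - t i) > (1 - \<beta>)\<^bsup>2d\<^esup> \<Prod>i |\<C> i| = (1 - \<alpha>) \<Prod>i |\<C> i|\<close> colorful tuples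
  have, on each of the \<open>d\<close> rows, no common point; so fewer than \<open>\<alpha> \<Prod>i |\<C> i|\<close> tuples
  intersect.

  The count is by induction: \<open>2 |J|\<close> families already give \<open>\<Prod>m (|C m| - t m)\<close> tuples
  that are empty on every row in \<open>J\<close>. On a row \<open>j \<in> J\<close> pick a member \<open>A0\<close> of some
  \<open>C m0\<close> and a point \<open>q\<close> lying in every member that meets \<open>A0\<close> on that row (the
  one-dimensional piercing argument). Tuples avoiding \<open>A0\<close> at \<open>m0\<close> are counted by
  induction after deleting \<open>A0\<close>; tuples using \<open>A0\<close> at \<open>m0\<close> and, at another index
  \<open>m1\<close>, one of the at least \<open>|C m1| - t m1\<close> members missing \<open>q\<close> are already empty on
  row \<open>j\<close>, and the remaining \<open>2 (|J| - 1)\<close> indices take care of the other rows.\<close>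

definition row_slice :: "'b \<Rightarrow> ('a \<times> 'b) set \<Rightarrow> 'a set" where
  "row_slice j A = {x. (x, j) \<in> A}"

lemma mem_row_slice_iff [simp]: "x \<in> row_slice j A \<longleftrightarrow> (x, j) \<in> A"
  by (simp add: row_slice_def)

text \<open>Traces \<open>I \<inter> P\<close> of intervals on a common ground set \<open>P\<close> form a relatively convex
  family; this is all the counting argument needs from convexity.\<close>

definition relatively_convex :: "'a::linorder set set \<Rightarrow> bool" where
  "relatively_convex F \<longleftrightarrow> (\<forall>A\<in>F. \<forall>x\<in>A. \<forall>z\<in>A. {x..z} \<inter> \<Union>F \<subseteq> A)"

lemma relatively_convex_subset:
  "relatively_convex G \<Longrightarrow> F \<subseteq> G \<Longrightarrow> relatively_convex F"
  unfolding relatively_convex_def by blast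

lemma finite_set_meeting_intersections:
  assumes "finite F"
  obtains W where "finite W" "\<And>A B. A \<in> F \<Longrightarrow> B \<in> F \<Longrightarrow> A \<inter> B \<noteq> {} \<Longrightarrow> W \<inter> A \<inter> B \<noteq> {}"
proof
  let ?w = "\<lambda>(A, B). SOME x. x \<in> A \<inter> B"
  show "finite (?w ` (F \<times> F))"
    using assms by simp
  fix A B
  assume "A \<in> F" "B \<in> F" "A \<inter> B \<noteq> {}"
  then have "?w (A, B) \<in> A \<inter> B" "?w (A, B) \<in> ?w ` (F \<times> F)"
    unfolding case_prod_conv some_in_eq by auto
  then show "?w ` (F \<times> F) \<inter> A \<inter> B \<noteq> {}"
    by blast
qed

text \<open>Take the member whose largest point in a finite set of witnesses of the pairwise
  intersections is smallest: that point lies in every member meeting it.\<close>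

lemma relatively_convex_piercing:
  fixes F :: "'a::linorder set set"
  assumes "finite F" "F \<noteq> {}" "relatively_convex F"
  shows "\<exists>A\<in>F. \<exists>q. \<forall>B\<in>F. A \<inter> B \<noteq> {} \<longrightarrow> q \<in> B"
proof (cases "{} \<in> F")
  case True
  then show ?thesis by blast
next
  case False
  obtain W where "finite W"
    and W: "\<And>A B. A \<in> F \<Longrightarrow> B \<in> F \<Longrightarrow> A \<inter> B \<noteq> {} \<Longrightarrow> W \<inter> A \<inter> B \<noteq> {}"
    using finite_set_meeting_intersections[OF assms(1)] by blast
  define r where "r A = Max (W \<inter> A)" for A
  have r: "r A \<in> W \<inter> A" "\<And>x. x \<in> W \<inter> A \<Longrightarrow> x \<le> r A" if "A \<in> F" for A
  proof -
    have "W \<inter> A \<noteq> {}"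
      using W[OF that that] that False by auto
    moreover have "finite (W \<inter> A)"
      using \<open>finite W\<close> by simp
    ultimately show "r A \<in> W \<inter> A" "\<And>x. x \<in> W \<inter> A \<Longrightarrow> x \<le> r A"
      unfolding r_def by (auto intro!: Max_in Max_ge simp del: Int_iff)
  qed
  have "Min (r ` F) \<in> r ` F"
    using assms(1,2) by (intro Min_in) auto
  then obtain A0 where A0: "A0 \<in> F" "r A0 = Min (r ` F)"
    by auto
  have "r A0 \<in> B" if B: "B \<in> F" "A0 \<inter> B \<noteq> {}" for B
  proof -
    obtain w where w: "w \<in> W" "w \<in> A0" "w \<in> B"
      using W[OF A0(1) B] by blast
    have "w \<le> r A0" "r A0 \<le> r B"
      using r(2)[OF A0(1)] w A0(2) Min_le[of "r ` F"] assms(1) B(1) by auto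
    moreover have "r A0 \<in> \<Union>F"
      using r(1)[OF A0(1)] A0(1) by blast
    moreover have "{w..r B} \<inter> \<Union>F \<subseteq> B"
      using assms(3) B(1) w(3) r(1)[OF B(1)] unfolding relatively_convex_def by blast
    ultimately show ?thesis
      by auto
  qed
  then show ?thesis
    using A0(1) by blast
qed

definition tuples_empty_on_rows ::
    "'i set \<Rightarrow> ('i \<Rightarrow> ('a \<times> 'b) set set) \<Rightarrow> 'b set \<Rightarrow> ('i \<Rightarrow> ('a \<times> 'b) set) set" where
  "tuples_empty_on_rows M C J = {f \<in> PiE M C. \<forall>j\<in>J. (\<Inter>m\<in>M. row_slice j (f m)) = {}}"

lemma tuples_empty_on_rows_subset_PiE: "tuples_empty_on_rows M C J \<subseteq> PiE M C"
  unfolding tuples_empty_on_rows_def by blast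

lemma tuples_empty_on_rows_mono:
  "(\<And>m. m \<in> M \<Longrightarrow> C' m \<subseteq> C m) \<Longrightarrow> tuples_empty_on_rows M C' J \<subseteq> tuples_empty_on_rows M C J"
  unfolding tuples_empty_on_rows_def using PiE_mono[of M C' C] by blast

lemma finite_tuples_empty_on_rows:
  "finite M \<Longrightarrow> \<forall>m\<in>M. finite (C m) \<Longrightarrow> finite (tuples_empty_on_rows M C J)"
  using tuples_empty_on_rows_subset_PiE by (rule finite_subset) (simp add: finite_PiE)

lemma card_tuples_empty_on_no_rows:
  "finite M \<Longrightarrow> card (tuples_empty_on_rows M C {}) = (\<Prod>m\<in>M. card (C m))"
  by (simp add: tuples_empty_on_rows_def card_PiE)

lemma inj_on_update_two:
  assumes "m0 \<noteq> m1"
  shows "inj_on (\<lambda>(b, h). h(m0 := a, m1 := b)) (B \<times> PiE (M - {m0, m1}) C)"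
proof (rule inj_onI, clarify)
  fix b h b' h'
  assume h: "h \<in> PiE (M - {m0, m1}) C" "h' \<in> PiE (M - {m0, m1}) C"
    and eq: "h(m0 := a, m1 := b) = h'(m0 := a, m1 := b')"
  have "h m = h' m" if "m \<in> M - {m0, m1}" for m
    using fun_cong[OF eq, of m] that by auto
  with h have "h = h'"
    by (intro PiE_ext)
  moreover have "b = b'"
    using fun_cong[OF eq, of m1] by simp
  ultimately show "b = b' \<and> h = h'"
    by simp
qed

lemma update_two_in_tuples_empty_on_rows:
  assumes "m0 \<in> M" "m1 \<in> M" "m0 \<noteq> m1" "a \<in> C m0" "b \<in> C m1"
    and "row_slice j a \<inter> row_slice j b = {}"
    and h: "h \<in> tuples_empty_on_rows (M - {m0, m1}) C (J - {j})"
  shows "h(m0 := a, m1 := b) \<in> tuples_empty_on_rows M C (insert j J)"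
proof -
  let ?f = "h(m0 := a, m1 := b)"
  have "?f \<in> PiE M C"
    using assms h unfolding tuples_empty_on_rows_def by (auto simp: PiE_iff extensional_def)
  moreover have "(\<Inter>m\<in>M. row_slice i (?f m)) = {}" if "i \<in> insert j J" for i
  proof (cases "i = j")
    case True
    have "(\<Inter>m\<in>M. row_slice j (?f m)) \<subseteq> row_slice j a \<inter> row_slice j b"
      using assms(1-3) by auto
    then show ?thesis
      using True assms(6) by blast
  next
    case False
    have "(\<Inter>m\<in>M. row_slice i (?f m)) \<subseteq> (\<Inter>m\<in>M - {m0, m1}. row_slice i (h m))"
      by (rule INT_anti_mono) auto
    also have "\<dots> = {}"
      using h that False unfolding tuples_empty_on_rows_def by blast
    finally show ?thesis
      by blast
  qed
  ultimately show ?thesis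
    unfolding tuples_empty_on_rows_def by simp
qed

lemma card_tuples_empty_on_rows_split:
  assumes fin: "finite M" "\<forall>m\<in>M. finite (C m)"
    and m01: "m0 \<in> M" "m1 \<in> M" "m0 \<noteq> m1" and A0: "A0 \<in> C m0" and "j \<in> J"
    and pierce: "\<forall>B\<in>C m1. row_slice j A0 \<inter> row_slice j B \<noteq> {} \<longrightarrow> q \<in> row_slice j B"
  shows "card (tuples_empty_on_rows M (C(m0 := C m0 - {A0})) J)
         + card {B \<in> C m1. q \<notin> row_slice j B} * card (tuples_empty_on_rows (M - {m0, m1}) C (J - {j}))
       \<le> card (tuples_empty_on_rows M C J)"
proof -
  let ?T = "tuples_empty_on_rows M C J"
  let ?T' = "tuples_empty_on_rows M (C(m0 := C m0 - {A0})) J"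
  let ?T2 = "tuples_empty_on_rows (M - {m0, m1}) C (J - {j})"
  let ?B1 = "{B \<in> C m1. q \<notin> row_slice j B}"
  let ?E = "(\<lambda>(b, h). h(m0 := A0, m1 := b)) ` (?B1 \<times> ?T2)"
  have "inj_on (\<lambda>(b, h). h(m0 := A0, m1 := b)) (?B1 \<times> ?T2)"
    using inj_on_update_two[OF m01(3), of A0 ?B1 M C]
    by (rule inj_on_subset) (intro Sigma_mono tuples_empty_on_rows_subset_PiE subset_refl)
  then have card_E: "card ?E = card ?B1 * card ?T2"
    by (simp add: card_image card_cartesian_product)
  have E_T: "?E \<subseteq> ?T"
  proof clarify
    fix b h
    assume b: "b \<in> C m1" "q \<notin> row_slice j b" and h: "h \<in> ?T2"
    then have "row_slice j A0 \<inter> row_slice j b = {}"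
      using pierce by blast
    then have "h(m0 := A0, m1 := b) \<in> tuples_empty_on_rows M C (insert j J)"
      by (rule update_two_in_tuples_empty_on_rows[OF m01 A0 b(1) _ h])
    then show "h(m0 := A0, m1 := b) \<in> ?T"
      using \<open>j \<in> J\<close> by (simp add: insert_absorb)
  qed
  have T'_T: "?T' \<subseteq> ?T"
    by (rule tuples_empty_on_rows_mono) auto
  have disjoint: "?T' \<inter> ?E = {}"
  proof -
    have "f m0 \<noteq> A0" if "f \<in> ?T'" for f
    proof -
      have "f \<in> PiE M (C(m0 := C m0 - {A0}))"
        using that by (rule subsetD[OF tuples_empty_on_rows_subset_PiE])
      from PiE_mem[OF this m01(1)] show ?thesis
        by simp
    qed
    moreover have "f m0 = A0" if "f \<in> ?E" for f
      using that m01(3) by auto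
    ultimately show ?thesis
      by blast
  qed
  have "finite ?T"
    using fin by (rule finite_tuples_empty_on_rows)
  have "card ?T' + card ?E = card (?T' \<union> ?E)"
    using disjoint finite_subset[OF T'_T \<open>finite ?T\<close>] finite_subset[OF E_T \<open>finite ?T\<close>]
    by (simp add: card_Un_disjoint)
  also have "\<dots> \<le> card ?T"
    using T'_T E_T \<open>finite ?T\<close> by (simp add: card_mono)
  finally show ?thesis
    unfolding card_E .
qed

lemma prod_le_prod_update_plus:
  fixes f :: "'a \<Rightarrow> nat"
  assumes "finite M" "m0 \<in> M" "m1 \<in> M" "m0 \<noteq> m1" "f m0 \<le> k + 1"
  shows "prod f M \<le> prod (f(m0 := k)) M + f m1 * prod f (M - {m0, m1})"
proof -
  have split: "prod g M = g m0 * (g m1 * prod g (M - {m0, m1}))" for g :: "'a \<Rightarrow> nat"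
  proof -
    have "prod g M = g m0 * prod g (M - {m0})"
      using assms(1,2) by (rule prod.remove)
    also have "prod g (M - {m0}) = g m1 * prod g (M - {m0} - {m1})"
      using assms(1,3,4) by (intro prod.remove) auto
    finally show ?thesis
      by (simp add: Diff_insert2 [symmetric] insert_commute)
  qed
  have "prod (f(m0 := k)) (M - {m0, m1}) = prod f (M - {m0, m1})"
    by (rule prod.cong) auto
  then have "prod (f(m0 := k)) M = k * (f m1 * prod f (M - {m0, m1}))"
    using split[of "f(m0 := k)"] assms(4) by simp
  moreover have "prod f M \<le> (k + 1) * (f m1 * prod f (M - {m0, m1}))"
    unfolding split[of f] using assms(5) by (rule mult_le_mono1)
  ultimately show ?thesis
    by (simp add: algebra_simps)
qed

definition interval_system ::
    "'i set \<Rightarrow> ('i \<Rightarrow> ('a::linorder \<times> 'b) set set) \<Rightarrow> 'b set \<Rightarrow> ('i \<Rightarrow> nat) \<Rightarrow> bool" where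
  "interval_system M C J t \<longleftrightarrow>
     (\<forall>m\<in>M. finite (C m)) \<and>
     (\<forall>j\<in>J. relatively_convex (row_slice j ` (\<Union>m\<in>M. C m))) \<and>
     (\<forall>m\<in>M. \<forall>p. card {A \<in> C m. p \<in> A} \<le> t m)"

lemma interval_system_mono:
  assumes "interval_system M C J t" "M' \<subseteq> M" "J' \<subseteq> J" "\<And>m. m \<in> M' \<Longrightarrow> C' m \<subseteq> C m"
  shows "interval_system M' C' J' t"
  unfolding interval_system_def
proof (intro conjI ballI allI)
  fix m
  assume "m \<in> M'"
  then have "m \<in> M" "C' m \<subseteq> C m"
    using assms(2,4) by blast+
  then show "finite (C' m)"
    using assms(1) finite_subset unfolding interval_system_def by blast
  fix p
  have "card {A \<in> C' m. p \<in> A} \<le> card {A \<in> C m. p \<in> A}"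
    using \<open>C' m \<subseteq> C m\<close> \<open>finite (C' m)\<close> \<open>m \<in> M\<close> assms(1) unfolding interval_system_def
    by (intro card_mono) auto
  also have "\<dots> \<le> t m"
    using assms(1) \<open>m \<in> M\<close> unfolding interval_system_def by blast
  finally show "card {A \<in> C' m. p \<in> A} \<le> t m" .
next
  fix j
  assume "j \<in> J'"
  have "row_slice j ` (\<Union>m\<in>M'. C' m) \<subseteq> row_slice j ` (\<Union>m\<in>M. C m)"
    using assms(2,4) by blast
  then show "relatively_convex (row_slice j ` (\<Union>m\<in>M'. C' m))"
    using assms(1,3) \<open>j \<in> J'\<close> relatively_convex_subset unfolding interval_system_def by blast
qed

lemma tuples_empty_on_rows_bound_step:
  fixes C :: "'i \<Rightarrow> ('a::linorder \<times> 'b) set set"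
  assumes sys: "interval_system M C J t" and "finite M"
    and m01: "m0 \<in> M" "m1 \<in> M" "m0 \<noteq> m1" and A0: "A0 \<in> C m0" and "j \<in> J"
    and pierce: "\<forall>B\<in>C m1. row_slice j A0 \<inter> row_slice j B \<noteq> {} \<longrightarrow> q \<in> row_slice j B"
    and IH_removed: "(\<Prod>m\<in>M. card ((C(m0 := C m0 - {A0})) m) - t m)
                     \<le> card (tuples_empty_on_rows M (C(m0 := C m0 - {A0})) J)"
    and IH_fewer: "(\<Prod>m\<in>M - {m0, m1}. card (C m) - t m)
                   \<le> card (tuples_empty_on_rows (M - {m0, m1}) C (J - {j}))"
  shows "(\<Prod>m\<in>M. card (C m) - t m) \<le> card (tuples_empty_on_rows M C J)"
proof -
  let ?B1 = "{B \<in> C m1. q \<notin> row_slice j B}"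
  define C' where "C' = C(m0 := C m0 - {A0})"
  have fin: "\<forall>m\<in>M. finite (C m)"
    using sys unfolding interval_system_def by blast
  have "card (C m1) \<le> card (?B1 \<union> {B \<in> C m1. q \<in> row_slice j B})"
    using fin m01(2) by (intro card_mono) auto
  also have "\<dots> \<le> card ?B1 + card {B \<in> C m1. q \<in> row_slice j B}"
    by (rule card_Un_le)
  also have "card {B \<in> C m1. q \<in> row_slice j B} \<le> t m1"
    using sys m01(2) unfolding interval_system_def by simp
  finally have B1: "card (C m1) - t m1 \<le> card ?B1"
    by simp
  have upd: "(\<lambda>m. card (C m) - t m)(m0 := card (C' m0) - t m0) = (\<lambda>m. card (C' m) - t m)"
    by (auto simp: C'_def)
  have "(\<Prod>m\<in>M. card (C m) - t m)
      \<le> prod ((\<lambda>m. card (C m) - t m)(m0 := card (C' m0) - t m0)) M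
        + (card (C m1) - t m1) * (\<Prod>m\<in>M - {m0, m1}. card (C m) - t m)"
    using fin m01 A0 \<open>finite M\<close> by (intro prod_le_prod_update_plus) (auto simp: C'_def)
  also have "\<dots> \<le> card (tuples_empty_on_rows M C' J)
      + card ?B1 * card (tuples_empty_on_rows (M - {m0, m1}) C (J - {j}))"
    unfolding upd unfolding C'_def by (intro add_mono mult_mono IH_removed IH_fewer B1 zero_le)
  also have "\<dots> \<le> card (tuples_empty_on_rows M C J)"
    unfolding C'_def using \<open>finite M\<close> fin m01 A0 \<open>j \<in> J\<close> pierce
    by (rule card_tuples_empty_on_rows_split)
  finally show ?thesis .
qed

lemma interval_system_piercing:
  assumes "interval_system M C J t" "finite M" "j \<in> J" "\<not> card M \<le> Suc 0" "\<forall>m\<in>M. C m \<noteq> {}"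
  obtains m0 m1 A0 q where "m0 \<in> M" "m1 \<in> M" "m0 \<noteq> m1" "A0 \<in> C m0"
    and "\<forall>B\<in>C m1. row_slice j A0 \<inter> row_slice j B \<noteq> {} \<longrightarrow> q \<in> row_slice j B"
proof -
  let ?G = "\<Union>m\<in>M. C m"
  have "M \<noteq> {}"
    using assms(4) by auto
  then have "finite (row_slice j ` ?G)" "row_slice j ` ?G \<noteq> {}" "relatively_convex (row_slice j ` ?G)"
    using assms unfolding interval_system_def by auto
  then have "\<exists>S\<in>row_slice j ` ?G. \<exists>q. \<forall>B\<in>row_slice j ` ?G. S \<inter> B \<noteq> {} \<longrightarrow> q \<in> B"
    by (rule relatively_convex_piercing)
  then obtain A0 q where A0: "A0 \<in> ?G"
    and "\<forall>B\<in>row_slice j ` ?G. row_slice j A0 \<inter> B \<noteq> {} \<longrightarrow> q \<in> B"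
    by (auto dest: bex_imageD)
  then have pierce: "\<forall>B\<in>?G. row_slice j A0 \<inter> row_slice j B \<noteq> {} \<longrightarrow> q \<in> row_slice j B"
    using ball_imageD by fast
  obtain m0 where "m0 \<in> M" "A0 \<in> C m0"
    using A0 by blast
  moreover obtain m1 where "m1 \<in> M" "m1 \<noteq> m0"
    using card_le_Suc0_iff_eq[OF assms(2)] \<open>m0 \<in> M\<close> assms(4) by blast
  ultimately show ?thesis
    using pierce by (intro that[of m0 m1 A0 q]) auto
qed

lemma sum_card_remove_less:
  assumes "finite M" "m0 \<in> M" "finite (C m0)" "A0 \<in> C m0"
  shows "(\<Sum>m\<in>M. card ((C(m0 := C m0 - {A0})) m)) < (\<Sum>m\<in>M. card (C m))"
proof (rule sum_strict_mono_ex1[OF assms(1)])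
  show "\<forall>m\<in>M. card ((C(m0 := C m0 - {A0})) m) \<le> card (C m)"
    using assms(3) by (simp add: card_Diff1_le)
  show "\<exists>m\<in>M. card ((C(m0 := C m0 - {A0})) m) < card (C m)"
    using assms by (intro bexI[of _ m0]) (simp_all add: card_Diff1_less del: card_Diff_insert)
qed

lemma card_tuples_empty_on_rows_ge:
  fixes C :: "'i \<Rightarrow> ('a::linorder \<times> 'b) set set"
  assumes "interval_system M C J t" "finite M" "finite J" "2 * card J \<le> card M"
  shows "(\<Prod>m\<in>M. card (C m) - t m) \<le> card (tuples_empty_on_rows M C J)"
  using assms
proof (induction "card J + (\<Sum>m\<in>M. card (C m))" arbitrary: M C J rule: less_induct)
  case less
  note sys = less.prems(1) and finM = less.prems(2) and finJ = less.prems(3)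
  consider "J = {}" | "\<exists>m\<in>M. C m = {}" | "J \<noteq> {}" "\<forall>m\<in>M. C m \<noteq> {}"
    by blast
  then show ?case
  proof cases
    case 1
    then show ?thesis
      using finM by (simp add: card_tuples_empty_on_no_rows prod_mono)
  next
    case 2
    then obtain m where "m \<in> M" "C m = {}"
      by blast
    then have "(\<Prod>m\<in>M. card (C m) - t m) = 0"
      using finM by (intro prod_zero bexI[of _ m]) auto
    then show ?thesis
      by simp
  next
    case 3
    then obtain j where "j \<in> J"
      by blast
    with finJ have "card J \<ge> 1"
      by (auto simp: Suc_le_eq card_gt_0_iff)
    with less.prems(4) have "\<not> card M \<le> Suc 0"
      by linarith
    with 3(2) obtain m0 m1 A0 q where m01: "m0 \<in> M" "m1 \<in> M" "m0 \<noteq> m1" and "A0 \<in> C m0"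
      and pierce: "\<forall>B\<in>C m1. row_slice j A0 \<inter> row_slice j B \<noteq> {} \<longrightarrow> q \<in> row_slice j B"
      using interval_system_piercing[OF sys finM \<open>j \<in> J\<close>] by metis
    show ?thesis
    proof (rule tuples_empty_on_rows_bound_step[OF sys finM m01 \<open>A0 \<in> C m0\<close> \<open>j \<in> J\<close> pierce])
      show "(\<Prod>m\<in>M. card ((C(m0 := C m0 - {A0})) m) - t m)
          \<le> card (tuples_empty_on_rows M (C(m0 := C m0 - {A0})) J)"
      proof (rule less.hyps)
        have "finite (C m0)"
          using sys m01(1) unfolding interval_system_def by blast
        from sum_card_remove_less[where C = C, OF finM m01(1) this \<open>A0 \<in> C m0\<close>]
        show "card J + (\<Sum>m\<in>M. card ((C(m0 := C m0 - {A0})) m)) < card J + (\<Sum>m\<in>M. card (C m))"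
          by simp
        show "interval_system M (C(m0 := C m0 - {A0})) J t"
          by (rule interval_system_mono[OF sys]) auto
      qed (use finM finJ less.prems(4) in auto)
      have "card (M - {m0, m1}) = card M - 2" "card (J - {j}) = card J - 1"
        using finM finJ m01 \<open>j \<in> J\<close> by (auto simp: card_Diff_subset)
      moreover have "(\<Sum>m\<in>M - {m0, m1}. card (C m)) \<le> (\<Sum>m\<in>M. card (C m))"
        using finM by (intro sum_mono2) auto
      ultimately show "(\<Prod>m\<in>M - {m0, m1}. card (C m) - t m)
          \<le> card (tuples_empty_on_rows (M - {m0, m1}) C (J - {j}))"
        using \<open>card J \<ge> 1\<close> less.prems(4) finM finJ
        by (intro less.hyps[OF _ interval_system_mono[OF sys]]) auto
    qed
  qed
qed

definition depth :: "'a set set \<Rightarrow> nat" where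
  "depth F = Max ((\<lambda>p. card {A \<in> F. p \<in> A}) ` UNIV)"

lemma card_pierced_le_card: "finite F \<Longrightarrow> card {A \<in> F. p \<in> A} \<le> card F"
  by (rule card_mono) auto

lemma finite_depth_values: "finite F \<Longrightarrow> finite (range (\<lambda>p. card {A \<in> F. p \<in> A}))"
  by (rule finite_subset[of _ "{..card F}"]) (auto simp: card_pierced_le_card)

lemma card_pierced_le_depth:
  assumes "finite F"
  shows "card {A \<in> F. p \<in> A} \<le> depth F"
  unfolding depth_def using finite_depth_values[OF assms] by (rule Max_ge) simp

lemma depth_attained:
  assumes "finite F"
  obtains p where "card {A \<in> F. p \<in> A} = depth F"
proof -
  have "depth F \<in> range (\<lambda>p. card {A \<in> F. p \<in> A})"
    unfolding depth_def using finite_depth_values[OF assms] by (rule Max_in) simp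
  then obtain p where "depth F = card {A \<in> F. p \<in> A}"
    by (rule rangeE)
  then show ?thesis
    by (intro that[of p]) simp
qed

lemma depth_le_card:
  assumes "finite F"
  shows "depth F \<le> card F"
proof -
  obtain p where "card {A \<in> F. p \<in> A} = depth F"
    using depth_attained[OF assms] .
  then show ?thesis
    using card_pierced_le_card[OF assms, of p] by simp
qed

lemma depth_less_if_pierced_subfamilies_less:
  assumes "finite F" "\<And>S p. S \<subseteq> F \<Longrightarrow> \<forall>A\<in>S. p \<in> A \<Longrightarrow> real (card S) < b"
  shows "real (depth F) < b"
proof -
  obtain p where "card {A \<in> F. p \<in> A} = depth F"
    using assms(1) by (rule depth_attained)
  moreover have "real (card {A \<in> F. p \<in> A}) < b"
    by (rule assms(2)) auto
  ultimately show ?thesis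
    by simp
qed

lemma C_equiv_subset: "A \<in> C_equiv d P \<Longrightarrow> A \<subseteq> P"
  unfolding C_equiv_def by blast

lemma relatively_convex_row_slices_C_equiv:
  assumes "G \<subseteq> C_equiv d P"
  shows "relatively_convex (row_slice j ` G)"
  unfolding relatively_convex_def
proof (intro ballI subsetI)
  fix S x z y
  assume S: "S \<in> row_slice j ` G" and xz: "x \<in> S" "z \<in> S"
    and y: "y \<in> {x..z} \<inter> \<Union>(row_slice j ` G)"
  obtain A where A: "A \<in> G" "S = row_slice j A"
    using S by blast
  obtain I where I: "d_interval d I" "A = I \<inter> P"
    using A(1) assms unfolding C_equiv_def by blast
  then obtain K where K: "\<forall>i\<in>{1..d}. convex (K i)" "I = {(x, i). i \<in> {1..d} \<and> x \<in> K i}"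
    unfolding d_interval_def by blast
  have j: "j \<in> {1..d}" and "x \<in> K j" "z \<in> K j"
    using xz A(2) I(2) K(2) by auto
  moreover have "is_interval (K j)"
    using K(1) j by (simp add: is_interval_convex_1)
  ultimately have "y \<in> K j"
    using y mem_is_interval_1_I by (metis IntD1 atLeastAtMost_iff)
  moreover obtain B where "B \<in> G" "(y, j) \<in> B"
    using y by auto
  then have "(y, j) \<in> P"
    using assms unfolding C_equiv_def by blast
  ultimately show "y \<in> S"
    using A(2) I(2) K(2) j by auto
qed

lemma interval_system_C_equiv:
  assumes "\<forall>m\<in>M. finite (C m) \<and> C m \<subseteq> C_equiv d P"
  shows "interval_system M C J (\<lambda>m. depth (C m))"
  unfolding interval_system_def
proof (intro conjI ballI allI)
  fix m
  assume "m \<in> M"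
  then show "finite (C m)"
    using assms by blast
next
  fix j
  have "(\<Union>m\<in>M. C m) \<subseteq> C_equiv d P"
    using assms by blast
  then show "relatively_convex (row_slice j ` (\<Union>m\<in>M. C m))"
    by (rule relatively_convex_row_slices_C_equiv)
next
  fix m p
  assume "m \<in> M"
  then have "finite (C m)"
    using assms by blast
  then show "card {A \<in> C m. p \<in> A} \<le> depth (C m)"
    by (rule card_pierced_le_depth)
qed

lemma card_intersecting_plus_card_empty_on_rows_le:
  assumes "finite M" "M \<noteq> {}" "\<forall>m\<in>M. finite (C m) \<and> (\<forall>A\<in>C m. A \<subseteq> UNIV \<times> J)"
  shows "card {f \<in> PiE M C. (\<Inter>m\<in>M. f m) \<noteq> {}} + card (tuples_empty_on_rows M C J)
    \<le> (\<Prod>m\<in>M. card (C m))"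
proof -
  let ?I = "{f \<in> PiE M C. (\<Inter>m\<in>M. f m) \<noteq> {}}"
  let ?T = "tuples_empty_on_rows M C J"
  have "f \<notin> ?T" if f: "f \<in> PiE M C" "(x, j) \<in> (\<Inter>m\<in>M. f m)" for f x j
  proof -
    obtain m where "m \<in> M"
      using assms(2) by blast
    then have "f m \<subseteq> UNIV \<times> J" "(x, j) \<in> f m"
      using f assms(3) by (auto simp: PiE_mem)
    then have "j \<in> J"
      by blast
    moreover have "x \<in> (\<Inter>m\<in>M. row_slice j (f m))"
      using f(2) by simp
    ultimately show ?thesis
      unfolding tuples_empty_on_rows_def by blast
  qed
  then have "?I \<inter> ?T = {}"
    by fast
  moreover have "?I \<subseteq> PiE M C" "?T \<subseteq> PiE M C" "finite (PiE M C)"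
    using assms(1,3) by (auto simp: tuples_empty_on_rows_def finite_PiE)
  ultimately have "card ?I + card ?T = card (?I \<union> ?T)"
    by (intro card_Un_disjoint[symmetric]) (auto intro: finite_subset)
  also have "\<dots> \<le> card (PiE M C)"
    using \<open>?I \<subseteq> PiE M C\<close> \<open>?T \<subseteq> PiE M C\<close> \<open>finite (PiE M C)\<close> by (intro card_mono) auto
  also have "\<dots> = (\<Prod>m\<in>M. card (C m))"
    using assms(1) by (rule card_PiE)
  finally show ?thesis .
qed

lemma card_intersecting_plus_prod_le:
  assumes "finite M" "M \<noteq> {}" "2 * d \<le> card M" "P \<subseteq> UNIV \<times> {1..d}"
    and "\<forall>m\<in>M. finite (C m) \<and> C m \<subseteq> C_equiv d P"
  shows "card {f \<in> PiE M C. (\<Inter>m\<in>M. f m) \<noteq> {}} + (\<Prod>m\<in>M. card (C m) - depth (C m))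
    \<le> (\<Prod>m\<in>M. card (C m))"
proof -
  have "(\<Prod>m\<in>M. card (C m) - depth (C m)) \<le> card (tuples_empty_on_rows M C {1..d})"
    using assms(3)
    by (intro card_tuples_empty_on_rows_ge[OF interval_system_C_equiv[OF assms(5)] assms(1)]) simp_all
  moreover have "\<forall>m\<in>M. finite (C m) \<and> (\<forall>A\<in>C m. A \<subseteq> UNIV \<times> {1..d})"
  proof (intro ballI conjI)
    fix m A
    assume "m \<in> M"
    then show "finite (C m)"
      using assms(5) by blast
    assume "A \<in> C m"
    then have "A \<subseteq> P"
      using assms(5) \<open>m \<in> M\<close> C_equiv_subset by blast
    then show "A \<subseteq> UNIV \<times> {1..d}"
      using assms(4) by (rule order_trans)
  qed
  then have "card {f \<in> PiE M C. (\<Inter>m\<in>M. f m) \<noteq> {}} + card (tuples_empty_on_rows M C {1..d})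
      \<le> (\<Prod>m\<in>M. card (C m))"
    by (rule card_intersecting_plus_card_empty_on_rows_le[OF assms(1,2)])
  ultimately show ?thesis
    by linarith
qed

lemma power_mult_prod_less_prod_diff:
  fixes n t :: "'i \<Rightarrow> nat" and \<beta> :: real
  assumes "finite M" "M \<noteq> {}" "\<beta> \<le> 1"
    and "\<And>m. m \<in> M \<Longrightarrow> t m \<le> n m \<and> real (t m) < \<beta> * real (n m)"
  shows "(1 - \<beta>) ^ card M * (\<Prod>m\<in>M. real (n m)) < (\<Prod>m\<in>M. real (n m - t m))"
proof -
  have factor: "0 \<le> (1 - \<beta>) * real (n m) \<and> (1 - \<beta>) * real (n m) < real (n m - t m)"
    if "m \<in> M" for m
  proof
    show "0 \<le> (1 - \<beta>) * real (n m)"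
      using assms(3) by (intro mult_nonneg_nonneg) auto
    show "(1 - \<beta>) * real (n m) < real (n m - t m)"
      using assms(4)[OF that] by (simp add: of_nat_diff left_diff_distrib)
  qed
  obtain i where "i \<in> M"
    using assms(2) by blast
  have "(1 - \<beta>) ^ card M * (\<Prod>m\<in>M. real (n m)) = (\<Prod>m\<in>M. (1 - \<beta>) * real (n m))"
    by (simp add: prod.distrib)
  also have "\<dots> < (\<Prod>m\<in>M. real (n m - t m))"
  proof (rule prod_mono_strict[OF \<open>i \<in> M\<close> _ assms(1)])
    show "(1 - \<beta>) * real (n i) < real (n i - t i)"
      using factor[OF \<open>i \<in> M\<close>] by blast
    show "0 \<le> (1 - \<beta>) * real (n m) \<and> (1 - \<beta>) * real (n m) \<le> real (n m - t m)"
      and "0 < real (n m - t m)" if "m \<in> M" for m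
      using factor[OF that] by linarith+
  qed
  finally show ?thesis .
qed

lemma powr_inverse_power:
  fixes x :: real
  assumes "0 \<le> x" "0 < k"
  shows "(x powr (1 / real k)) ^ k = x"
proof (cases "x = 0")
  case True
  then show ?thesis
    using assms by simp
next
  case False
  then have "(x powr (1 / real k)) ^ k = x powr (real k * (1 / real k))"
    by (rule powr_power)
  also have "\<dots> = x"
    using assms False by simp
  finally show ?thesis .
qed

theorem theorem6:
  fixes d :: nat and P :: "(real \<times> nat) set" and \<alpha> :: real
    and \<C> :: "nat \<Rightarrow> (real \<times> nat) set set"
  assumes "d \<ge> 1"
    and "P \<subseteq> UNIV \<times> {1..d}"
    and "0 < \<alpha>" and "\<alpha> \<le> 1"
    and "\<forall>i\<in>{1..2*d}. finite (\<C> i) \<and> \<C> i \<subseteq> C_equiv d P"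
    and "real (card {f \<in> PiE {1..2*d} \<C>. (\<Inter>i\<in>{1..2*d}. f i) \<noteq> {}})
           \<ge> \<alpha> * (\<Prod>i\<in>{1..2*d}. real (card (\<C> i)))"
  shows "\<exists>i\<in>{1..2*d}. \<exists>S \<subseteq> \<C> i.
           real (card S) \<ge> (1 - (1 - \<alpha>) powr (1 / real (2*d))) * real (card (\<C> i))
           \<and> (\<exists>p. \<forall>C\<in>S. p \<in> C)"
proof (rule ccontr)
  define M where "M = {1..2*d}"
  define \<beta> where "\<beta> = 1 - (1 - \<alpha>) powr (1 / real (2*d))"
  let ?n = "\<lambda>i. real (card (\<C> i))"
  let ?I = "{f \<in> PiE M \<C>. (\<Inter>m\<in>M. f m) \<noteq> {}}"
  have M: "finite M" "M \<noteq> {}" "card M = 2 * d"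
    using assms(1) by (auto simp: M_def)
  have fin: "\<forall>m\<in>M. finite (\<C> m) \<and> \<C> m \<subseteq> C_equiv d P"
    using assms(5) by (simp add: M_def)
  assume "\<not> ?thesis"
  then have small: "\<forall>i\<in>M. \<forall>S\<subseteq>\<C> i. (\<exists>p. \<forall>C\<in>S. p \<in> C) \<longrightarrow> real (card S) < \<beta> * ?n i"
    unfolding M_def \<beta>_def by (meson not_le)
  have depth: "depth (\<C> m) \<le> card (\<C> m) \<and> real (depth (\<C> m)) < \<beta> * ?n m" if "m \<in> M" for m
    using fin small that depth_le_card by (metis depth_less_if_pierced_subfamilies_less)
  have "\<beta> \<le> 1" "(1 - \<beta>) ^ card M = 1 - \<alpha>"
    using powr_inverse_power[of "1 - \<alpha>" "2 * d"] assms(1,4) M(3) by (simp_all add: \<beta>_def)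
  then have "(1 - \<alpha>) * (\<Prod>m\<in>M. ?n m) < (\<Prod>m\<in>M. real (card (\<C> m) - depth (\<C> m)))"
    using power_mult_prod_less_prod_diff[OF M(1,2) \<open>\<beta> \<le> 1\<close> depth] by simp
  moreover have "real (card ?I) + (\<Prod>m\<in>M. real (card (\<C> m) - depth (\<C> m))) \<le> (\<Prod>m\<in>M. ?n m)"
    unfolding of_nat_prod[symmetric] of_nat_add[symmetric] of_nat_le_iff
    using M(3) by (intro card_intersecting_plus_prod_le[OF M(1,2) _ assms(2) fin]) simp
  moreover have "\<alpha> * (\<Prod>m\<in>M. ?n m) \<le> real (card ?I)"
    using assms(6) unfolding M_def .
  ultimately show False
    by (simp add: left_diff_distrib)
qed

end
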